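(* Let $\Gamma=(\mathcal{G},\mathcal{I},\boldsymbol{c})$ be a nonatomic routing game with BPR-type cost functions, i.e., there is $\beta\in\mathbb{R}_+$ such that $c_e(x)=t_e+a_ex^{\beta}$ with $t_e,a_e\in\mathbb{R}_+$ for every edge $e$, and suppose $\mathcal{G}$ is a directed acyclic multigraph. Then there exists a non-negative demand-independent optimal toll (DIOT) $\boldsymbol{\tau}\in\mathbb{R}_+^{\mathcal{E}}$ for $\Gamma$.
   Context: A nonatomic routing game $\Gamma=(\mathcal{G},\mathcal{I},\boldsymbol{c})$ consists of a finite directed multigraph $\mathcal{G}=(\mathcal{V},\mathcal{E})$, a finite set $\mathcal{I}$ of origin-destination pairs $i$ with origin $o^i$ and destination $d^i$, and nondecreasing continuous cost functions $c_e:\mathbb{R}_+\to\mathbb{R}_+$. $\mathcal{P}^i$ is the set of simple $o^i$–$d^i$ paths. For a demand vector $\boldsymbol{\mu}\in\mathbb{R}_+^{\mathcal{I}}$, feasible flows are $\boldsymbol{f}\in\mathbb{R}_+^{\mathcal{P}}$ with $\sum_{p\in\mathcal{P}^i}f_p=\mu^i$; loads $x_e=\sum_{p\ni e}f_p$; path costs $c_p=\sum_{e\in p}c_e(x_e)$. A Wardrop equilibrium is a feasible flow where every used path of each pair $i$ has cost at most that of any other path in $\mathcal{P}^i$. The total cost is $L(\boldsymbol{f})=\sum_p f_pc_p(\boldsymbol{f})$; a system optimum minimizes $L$ over feasible flows. For a toll vector $\boldsymbol{\tau}\in\mathbb{R}^{\mathcal{E}}$, $\Gamma^{\boldsymbol{\tau}}$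 has edge costs $c_e(x)+\tau_e$. $\boldsymbol{\tau}$ is a DIOT for $\Gamma$ if for every demand vector $\boldsymbol{\mu}\in\mathbb{R}_+^{\mathcal{I}}$ every Wardrop equilibrium of $\Gamma^{\boldsymbol{\tau}}$ with demand $\boldsymbol{\mu}$ is a system optimum of $\Gamma$ for demand $\boldsymbol{\mu}$. *)

theory Defs
  imports Complex_Main
begin

text \<open>A directed multigraph is given by a set of edges E (of an arbitrary type 'e,
  so parallel edges are allowed) together with tail (src) and head (trg) maps.\<close>

fun walk :: "'e set \<Rightarrow> ('e \<Rightarrow> 'v) \<Rightarrow> ('e \<Rightarrow> 'v) \<Rightarrow> 'v \<Rightarrow> 'e list \<Rightarrow> 'v \<Rightarrow> bool" where
  "walk E src trg u [] v \<longleftrightarrow> u = v"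
| "walk E src trg u (e # es) v \<longleftrightarrow> e \<in> E \<and> src e = u \<and> walk E src trg (trg e) es v"

definition simple_path :: "'e set \<Rightarrow> ('e \<Rightarrow> 'v) \<Rightarrow> ('e \<Rightarrow> 'v) \<Rightarrow> 'v \<Rightarrow> 'e list \<Rightarrow> 'v \<Rightarrow> bool" where
  "simple_path E src trg u p v \<longleftrightarrow> walk E src trg u p v \<and> distinct (u # map trg p)"

definition acyclic_graph :: "'e set \<Rightarrow> ('e \<Rightarrow> 'v) \<Rightarrow> ('e \<Rightarrow> 'v) \<Rightarrow> bool" where
  "acyclic_graph E src trg \<longleftrightarrow> \<not> (\<exists>u p. p \<noteq> [] \<and> walk E src trg u p u)"

definition paths :: "'e set \<Rightarrow> ('e \<Rightarrow> 'v) \<Rightarrow> ('e \<Rightarrow> 'v) \<Rightarrow> ('i \<Rightarrow> 'v) \<Rightarrow> ('i \<Rightarrow> 'v) \<Rightarrow> 'i \<Rightarrow> 'e list set" where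
  "paths E src trg org dst i = {p. simple_path E src trg (org i) p (dst i)}"

definition load :: "'e set \<Rightarrow> ('e \<Rightarrow> 'v) \<Rightarrow> ('e \<Rightarrow> 'v) \<Rightarrow> 'i set \<Rightarrow> ('i \<Rightarrow> 'v) \<Rightarrow> ('i \<Rightarrow> 'v)
    \<Rightarrow> ('i \<Rightarrow> 'e list \<Rightarrow> real) \<Rightarrow> 'e \<Rightarrow> real" where
  "load E src trg I org dst f e =
     (\<Sum>i\<in>I. \<Sum>p\<in>paths E src trg org dst i. if e \<in> set p then f i p else 0)"

definition path_cost :: "('e \<Rightarrow> real \<Rightarrow> real) \<Rightarrow> ('e \<Rightarrow> real) \<Rightarrow> 'e list \<Rightarrow> real" where
  "path_cost c x p = (\<Sum>e\<leftarrow>p. c e (x e))"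

definition feasible :: "'e set \<Rightarrow> ('e \<Rightarrow> 'v) \<Rightarrow> ('e \<Rightarrow> 'v) \<Rightarrow> 'i set \<Rightarrow> ('i \<Rightarrow> 'v) \<Rightarrow> ('i \<Rightarrow> 'v)
    \<Rightarrow> ('i \<Rightarrow> real) \<Rightarrow> ('i \<Rightarrow> 'e list \<Rightarrow> real) \<Rightarrow> bool" where
  "feasible E src trg I org dst \<mu> f \<longleftrightarrow>
     (\<forall>i\<in>I. \<forall>p\<in>paths E src trg org dst i. 0 \<le> f i p) \<and>
     (\<forall>i\<in>I. (\<Sum>p\<in>paths E src trg org dst i. f i p) = \<mu> i)"

definition wardrop :: "'e set \<Rightarrow> ('e \<Rightarrow> 'v) \<Rightarrow> ('e \<Rightarrow> 'v) \<Rightarrow> 'i set \<Rightarrow> ('i \<Rightarrow> 'v) \<Rightarrow> ('i \<Rightarrow> 'v)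
    \<Rightarrow> ('e \<Rightarrow> real \<Rightarrow> real) \<Rightarrow> ('i \<Rightarrow> real) \<Rightarrow> ('i \<Rightarrow> 'e list \<Rightarrow> real) \<Rightarrow> bool" where
  "wardrop E src trg I org dst c \<mu> f \<longleftrightarrow>
     feasible E src trg I org dst \<mu> f \<and>
     (\<forall>i\<in>I. \<forall>p\<in>paths E src trg org dst i. 0 < f i p \<longrightarrow>
        (\<forall>q\<in>paths E src trg org dst i.
           path_cost c (load E src trg I org dst f) p \<le> path_cost c (load E src trg I org dst f) q))"

definition total_cost :: "'e set \<Rightarrow> ('e \<Rightarrow> 'v) \<Rightarrow> ('e \<Rightarrow> 'v) \<Rightarrow> 'i set \<Rightarrow> ('i \<Rightarrow> 'v) \<Rightarrow> ('i \<Rightarrow> 'v)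
    \<Rightarrow> ('e \<Rightarrow> real \<Rightarrow> real) \<Rightarrow> ('i \<Rightarrow> 'e list \<Rightarrow> real) \<Rightarrow> real" where
  "total_cost E src trg I org dst c f =
     (\<Sum>i\<in>I. \<Sum>p\<in>paths E src trg org dst i. f i p * path_cost c (load E src trg I org dst f) p)"

definition system_optimum :: "'e set \<Rightarrow> ('e \<Rightarrow> 'v) \<Rightarrow> ('e \<Rightarrow> 'v) \<Rightarrow> 'i set \<Rightarrow> ('i \<Rightarrow> 'v) \<Rightarrow> ('i \<Rightarrow> 'v)
    \<Rightarrow> ('e \<Rightarrow> real \<Rightarrow> real) \<Rightarrow> ('i \<Rightarrow> real) \<Rightarrow> ('i \<Rightarrow> 'e list \<Rightarrow> real) \<Rightarrow> bool" where
  "system_optimum E src trg I org dst c \<mu> f \<longleftrightarrow>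
     feasible E src trg I org dst \<mu> f \<and>
     (\<forall>g. feasible E src trg I org dst \<mu> g \<longrightarrow>
        total_cost E src trg I org dst c f \<le> total_cost E src trg I org dst c g)"

definition DIOT :: "'e set \<Rightarrow> ('e \<Rightarrow> 'v) \<Rightarrow> ('e \<Rightarrow> 'v) \<Rightarrow> 'i set \<Rightarrow> ('i \<Rightarrow> 'v) \<Rightarrow> ('i \<Rightarrow> 'v)
    \<Rightarrow> ('e \<Rightarrow> real \<Rightarrow> real) \<Rightarrow> ('e \<Rightarrow> real) \<Rightarrow> bool" where
  "DIOT E src trg I org dst c \<tau> \<longleftrightarrow>
     (\<forall>\<mu>. (\<forall>i\<in>I. 0 \<le> \<mu> i) \<longrightarrow>
       (\<forall>f. wardrop E src trg I org dst (\<lambda>e x. c e x + \<tau> e) \<mu> f \<longrightarrow>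
            system_optimum E src trg I org dst c \<mu> f))"

text \<open>BPR-type cost t_e + a_e x^beta, with the convention x^0 = 1 (also at x = 0).\<close>
definition bpr_cost :: "('e \<Rightarrow> real) \<Rightarrow> ('e \<Rightarrow> real) \<Rightarrow> real \<Rightarrow> 'e \<Rightarrow> real \<Rightarrow> real" where
  "bpr_cost t a \<beta> e x = t e + a e * (if \<beta> = 0 then 1 else x powr \<beta>)"

end

theory Submission
  imports Defs "HOL-Analysis.Analysis"
begin

text \<open>Put \<delta> e = \<beta> t(e) / (1 + \<beta>). On an acyclic graph a longest-path argument gives a
  potential \<pi> with \<pi>(trg e) - \<pi>(src e) \<ge> \<delta> e, so \<tau> e = \<pi>(trg e) - \<pi>(src e) - \<delta> e is a
  nonnegative toll. With it, the tolled cost c(e,x) + \<tau> e is the marginal cost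
  d/dx (x c(e,x)) = t(e) + (1 + \<beta>) a(e) x^\<beta> divided by 1 + \<beta>, plus the potential difference
  along e. The potential adds the same amount \<pi>(dst i) - \<pi>(org i) to every path of the pair i,
  independently of the demand, so a Wardrop equilibrium of the tolled game satisfies the
  variational inequality for the marginal costs, and convexity of x c(e,x) turns that inequality
  into system optimality.\<close>

lemma walk_append:
  "walk E src trg u (p @ q) v \<longleftrightarrow> (\<exists>w. walk E src trg u p w \<and> walk E src trg w q v)"
  by (induction p arbitrary: u) auto

lemma walk_edges_subset: "walk E src trg u p v \<Longrightarrow> set p \<subseteq> E"
  by (induction p arbitrary: u) auto

lemma walk_sum_potential_difference:
  fixes pot :: "'v \<Rightarrow> real"
  shows "walk E src trg u p v \<Longrightarrow> (\<Sum>e\<leftarrow>p. pot (trg e) - pot (src e)) = pot v - pot u"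
  by (induction p arbitrary: u) auto

lemma acyclic_walk_to_tail_not_mem:
  assumes "acyclic_graph E src trg" "walk E src trg u p (src e)"
  shows "e \<notin> set p"
proof
  assume "e \<in> set p"
  then obtain p1 p2 where "p = p1 @ e # p2" by (meson split_list)
  with assms(2) have "walk E src trg (src e) (e # p2) (src e)"
    by (auto simp: walk_append)
  with assms(1) show False unfolding acyclic_graph_def by blast
qed

text \<open>The potential of v is the largest \<delta>-length of a walk without repeated edges ending in v;
  acyclicity is what allows such a walk into src e to be extended by e.\<close>

lemma acyclic_graph_potential_exists:
  fixes \<delta> :: "'e \<Rightarrow> real"
  assumes "finite E" "acyclic_graph E src trg"
  shows "\<exists>\<pi> :: 'v \<Rightarrow> real. \<forall>e\<in>E. \<pi> (src e) + \<delta> e \<le> \<pi> (trg e)"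
proof -
  define W where "W v = {p. (\<exists>u. walk E src trg u p v) \<and> distinct p}" for v
  define \<pi> where "\<pi> v = Max ((\<lambda>p. sum_list (map \<delta> p)) ` W v)" for v
  have fin: "finite (W v)" for v
    by (rule finite_subset[OF _ finite_subset_distinct[OF assms(1)]])
       (auto simp: W_def dest: walk_edges_subset)
  have "\<pi> (src e) + \<delta> e \<le> \<pi> (trg e)" if "e \<in> E" for e
  proof -
    have "[] \<in> W (src e)" unfolding W_def by auto
    then obtain p where p: "p \<in> W (src e)" "\<pi> (src e) = sum_list (map \<delta> p)"
      using Max_in[of "(\<lambda>p. sum_list (map \<delta> p)) ` W (src e)"] fin unfolding \<pi>_def by fastforce
    then obtain u where u: "walk E src trg u p (src e)" "distinct p" unfolding W_def by blast
    with assms(2) \<open>e \<in> E\<close> have "p @ [e] \<in> W (trg e)"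
      by (auto simp: W_def walk_append dest: acyclic_walk_to_tail_not_mem)
    then have "sum_list (map \<delta> (p @ [e])) \<le> \<pi> (trg e)"
      unfolding \<pi>_def by (metis Max_ge fin finite_imageI imageI)
    with p(2) show ?thesis by simp
  qed
  then show ?thesis by blast
qed

lemma mem_pathsD:
  assumes "p \<in> paths E src trg org dst i"
  shows "distinct p" "set p \<subseteq> E" "walk E src trg (org i) p (dst i)"
  using assms unfolding paths_def Defs.simple_path_def
  by (auto dest: walk_edges_subset simp: distinct_map)

lemma finite_paths: "finite E \<Longrightarrow> finite (paths E src trg org dst i)"
  by (rule finite_subset[OF _ finite_subset_distinct]) (auto dest: mem_pathsD)

lemma load_nonneg: "feasible E src trg I org dst \<mu> h \<Longrightarrow> 0 \<le> load E src trg I org dst h e"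
  unfolding feasible_def load_def by (auto intro!: sum_nonneg)

lemma sum_paths_sum_list_eq_sum_load:
  fixes w :: "'e \<Rightarrow> real" and h :: "'i \<Rightarrow> 'e list \<Rightarrow> real"
  assumes "finite E" "finite I"
  shows "(\<Sum>i\<in>I. \<Sum>p\<in>paths E src trg org dst i. h i p * sum_list (map w p))
       = (\<Sum>e\<in>E. w e * load E src trg I org dst h e)"
proof -
  have "sum_list (map w p) = (\<Sum>e\<in>E. if e \<in> set p then w e else 0)"
    if "p \<in> paths E src trg org dst i" for i p
    using mem_pathsD[OF that] assms(1)
    by (simp add: sum_list_distinct_conv_sum_set sum.If_cases Int_absorb1)
  then have "(\<Sum>i\<in>I. \<Sum>p\<in>paths E src trg org dst i. h i p * sum_list (map w p))
      = (\<Sum>i\<in>I. \<Sum>p\<in>paths E src trg org dst i. \<Sum>e\<in>E. w e * (if e \<in> set p then h i p else 0))"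
    by (auto simp: sum_distrib_left intro!: sum.cong)
  also have "\<dots> = (\<Sum>e\<in>E. \<Sum>i\<in>I. \<Sum>p\<in>paths E src trg org dst i. w e * (if e \<in> set p then h i p else 0))"
    by (subst sum.swap) (simp add: sum.swap[of _ _ E])
  also have "\<dots> = (\<Sum>e\<in>E. w e * load E src trg I org dst h e)"
    unfolding load_def by (simp add: sum_distrib_left)
  finally show ?thesis .
qed

lemma total_cost_eq_sum_edges:
  assumes "finite E" "finite I"
  shows "total_cost E src trg I org dst c h
       = (\<Sum>e\<in>E. c e (load E src trg I org dst h e) * load E src trg I org dst h e)"
  unfolding total_cost_def path_cost_def by (rule sum_paths_sum_list_eq_sum_load[OF assms])

lemma sum_load_potential_difference:
  fixes pot :: "'v \<Rightarrow> real"
  assumes "finite E" "finite I" "feasible E src trg I org dst \<mu> h"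
  shows "(\<Sum>e\<in>E. (pot (trg e) - pot (src e)) * load E src trg I org dst h e)
       = (\<Sum>i\<in>I. \<mu> i * (pot (dst i) - pot (org i)))"
proof -
  have "(\<Sum>e\<in>E. (pot (trg e) - pot (src e)) * load E src trg I org dst h e)
     = (\<Sum>i\<in>I. \<Sum>p\<in>paths E src trg org dst i. h i p * (\<Sum>e\<leftarrow>p. pot (trg e) - pot (src e)))"
    by (rule sum_paths_sum_list_eq_sum_load[OF assms(1,2), symmetric])
  also have "\<dots> = (\<Sum>i\<in>I. \<Sum>p\<in>paths E src trg org dst i. h i p * (pot (dst i) - pot (org i)))"
    by (intro sum.cong refl) (simp add: walk_sum_potential_difference[OF mem_pathsD(3)])
  also have "\<dots> = (\<Sum>i\<in>I. \<mu> i * (pot (dst i) - pot (org i)))"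
    using assms(3) unfolding feasible_def by (simp add: sum_distrib_right[symmetric])
  finally show ?thesis .
qed

lemma sum_weighted_le_if_supported_on_minima:
  fixes f g C :: "'p \<Rightarrow> real"
  assumes "finite P" "\<forall>p\<in>P. 0 \<le> f p" "\<forall>p\<in>P. 0 \<le> g p" "sum f P = sum g P"
    and supp: "\<forall>p\<in>P. 0 < f p \<longrightarrow> (\<forall>q\<in>P. C p \<le> C q)"
  shows "(\<Sum>p\<in>P. f p * C p) \<le> (\<Sum>p\<in>P. g p * C p)"
proof (cases "P = {}")
  case False
  define m where "m = Min (C ` P)"
  have m_le: "m \<le> C p" if "p \<in> P" for p
    unfolding m_def using assms(1) that by simp
  have "f p * C p = f p * m" if "p \<in> P" for p
  proof (cases "f p > 0")
    case True
    with supp that assms(1) False have "C p \<le> m" unfolding m_def by (auto simp: Min_ge_iff)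
    with m_le[OF that] show ?thesis by simp
  qed (use assms(2) that in force)
  then have "(\<Sum>p\<in>P. f p * C p) = (\<Sum>p\<in>P. f p * m)"
    by (rule sum.cong[OF refl])
  also have "\<dots> = m * sum f P"
    by (simp add: sum_distrib_left mult.commute)
  also have "\<dots> = (\<Sum>p\<in>P. g p * m)"
    using assms(4) by (simp add: sum_distrib_left mult.commute)
  also have "\<dots> \<le> (\<Sum>p\<in>P. g p * C p)"
    using assms(3) m_le by (intro sum_mono mult_left_mono) auto
  finally show ?thesis .
qed simp

lemma wardrop_variational_inequality:
  assumes "finite E" "finite I"
    and eq: "wardrop E src trg I org dst c \<mu> f" and g: "feasible E src trg I org dst \<mu> g"
  shows "(\<Sum>e\<in>E. c e (load E src trg I org dst f e) * load E src trg I org dst f e)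
       \<le> (\<Sum>e\<in>E. c e (load E src trg I org dst f e) * load E src trg I org dst g e)"
proof -
  define w where "w e = c e (load E src trg I org dst f e)" for e
  have "(\<Sum>i\<in>I. \<Sum>p\<in>paths E src trg org dst i. f i p * sum_list (map w p))
      \<le> (\<Sum>i\<in>I. \<Sum>p\<in>paths E src trg org dst i. g i p * sum_list (map w p))"
  proof (rule sum_mono)
    fix i assume "i \<in> I"
    have "path_cost c (load E src trg I org dst f) = (\<lambda>p. sum_list (map w p))"
      unfolding path_cost_def w_def ..
    with eq g \<open>i \<in> I\<close> show "(\<Sum>p\<in>paths E src trg org dst i. f i p * sum_list (map w p))
        \<le> (\<Sum>p\<in>paths E src trg org dst i. g i p * sum_list (map w p))"
      unfolding wardrop_def feasible_def
      by (intro sum_weighted_le_if_supported_on_minima finite_paths assms(1)) auto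
  qed
  then show ?thesis
    unfolding sum_paths_sum_list_eq_sum_load[OF assms(1,2)] w_def .
qed

lemma wardrop_marginal_cost_imp_system_optimum:
  fixes c m :: "'e \<Rightarrow> real \<Rightarrow> real" and pot :: "'v \<Rightarrow> real" and k :: real
  assumes "finite E" "finite I" "0 < k"
    and subgradient: "\<And>e x y. e \<in> E \<Longrightarrow> 0 \<le> x \<Longrightarrow> 0 \<le> y \<Longrightarrow>
                        m e x * (y - x) \<le> c e y * y - c e x * x"
    and eq: "wardrop E src trg I org dst (\<lambda>e x. k * m e x + (pot (trg e) - pot (src e))) \<mu> f"
  shows "system_optimum E src trg I org dst c \<mu> f"
proof -
  let ?x = "load E src trg I org dst f"
  have f: "feasible E src trg I org dst \<mu> f" using eq unfolding wardrop_def by blast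
  have "total_cost E src trg I org dst c f \<le> total_cost E src trg I org dst c g"
    if g: "feasible E src trg I org dst \<mu> g" for g
  proof -
    let ?y = "load E src trg I org dst g"
    let ?PD = "\<lambda>e. pot (trg e) - pot (src e)"
    have "(\<Sum>e\<in>E. (k * m e (?x e) + ?PD e) * ?x e) \<le> (\<Sum>e\<in>E. (k * m e (?x e) + ?PD e) * ?y e)"
      by (rule wardrop_variational_inequality[OF assms(1,2) eq g])
    moreover have "(\<Sum>e\<in>E. ?PD e * ?x e) = (\<Sum>e\<in>E. ?PD e * ?y e)"
      unfolding sum_load_potential_difference[OF assms(1,2) f]
        sum_load_potential_difference[OF assms(1,2) g] ..
    ultimately have "k * (\<Sum>e\<in>E. m e (?x e) * ?x e) \<le> k * (\<Sum>e\<in>E. m e (?x e) * ?y e)"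
      by (simp add: distrib_right sum.distrib sum_distrib_left mult.assoc)
    with \<open>0 < k\<close> have "(\<Sum>e\<in>E. m e (?x e) * ?x e) \<le> (\<Sum>e\<in>E. m e (?x e) * ?y e)"
      by simp
    moreover have "(\<Sum>e\<in>E. m e (?x e) * (?y e - ?x e)) \<le> (\<Sum>e\<in>E. c e (?y e) * ?y e - c e (?x e) * ?x e)"
      using f g by (intro sum_mono subgradient load_nonneg)
    ultimately show ?thesis
      unfolding total_cost_eq_sum_edges[OF assms(1,2)]
      by (simp add: sum_subtractf right_diff_distrib)
  qed
  with f show ?thesis unfolding system_optimum_def by blast
qed

lemma mult_powr_above_tangent:
  fixes x y b :: real
  assumes "0 \<le> x" "0 \<le> y" "0 < b"
  shows "(1 + b) * x powr b * (y - x) \<le> y * y powr b - x * x powr b"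
proof (cases "x = 0 \<or> y = 0")
  case False
  with assms have "(1 + b) * x powr b * (y - x) \<le> y powr (1 + b) - x powr (1 + b)"
    by (intro convex_on_imp_above_tangent[where A = "{0<..}"] powr_convex)
       (auto intro!: derivative_eq_intros simp: interior_open)
  with False assms show ?thesis by (simp add: powr_add)
next
  case True
  with assms have "x * x powr b \<le> (1 + b) * x powr b * x"
    by (simp add: algebra_simps)
  with True assms show ?thesis by auto
qed

definition bpr_marginal_cost :: "('e \<Rightarrow> real) \<Rightarrow> ('e \<Rightarrow> real) \<Rightarrow> real \<Rightarrow> 'e \<Rightarrow> real \<Rightarrow> real" where
  "bpr_marginal_cost t a \<beta> e x = t e + (1 + \<beta>) * a e * (if \<beta> = 0 then 1 else x powr \<beta>)"

lemma bpr_marginal_cost_above_tangent: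
  assumes "0 \<le> \<beta>" "0 \<le> a e" "0 \<le> x" "0 \<le> y"
  shows "bpr_marginal_cost t a \<beta> e x * (y - x)
       \<le> bpr_cost t a \<beta> e y * y - bpr_cost t a \<beta> e x * x"
proof (cases "\<beta> = 0")
  case True
  then show ?thesis by (simp add: bpr_marginal_cost_def bpr_cost_def algebra_simps)
next
  case False
  with assms have "a e * ((1 + \<beta>) * x powr \<beta> * (y - x)) \<le> a e * (y * y powr \<beta> - x * x powr \<beta>)"
    by (intro mult_left_mono mult_powr_above_tangent) auto
  with False show ?thesis by (simp add: bpr_marginal_cost_def bpr_cost_def algebra_simps)
qed

theorem theorem6:
  fixes E :: "'e set" and src trg :: "'e \<Rightarrow> 'v"
    and I :: "'i set" and org dst :: "'i \<Rightarrow> 'v"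
    and t a :: "'e \<Rightarrow> real" and \<beta> :: real
  assumes "finite E" and "finite I"
    and "acyclic_graph E src trg"
    and "0 \<le> \<beta>"
    and "\<forall>e\<in>E. 0 \<le> t e \<and> 0 \<le> a e"
  shows "\<exists>\<tau> :: 'e \<Rightarrow> real. (\<forall>e\<in>E. 0 \<le> \<tau> e) \<and>
           DIOT E src trg I org dst (bpr_cost t a \<beta>) \<tau>"
proof -
  define \<delta> where "\<delta> e = \<beta> * t e / (1 + \<beta>)" for e
  obtain pot :: "'v \<Rightarrow> real" where pot: "\<forall>e\<in>E. pot (src e) + \<delta> e \<le> pot (trg e)"
    using acyclic_graph_potential_exists[OF assms(1,3)] by blast
  define \<tau> where "\<tau> e = pot (trg e) - pot (src e) - \<delta> e" for e
  have tolled_cost: "(\<lambda>e x. bpr_cost t a \<beta> e x + \<tau> e)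
      = (\<lambda>e x. 1 / (1 + \<beta>) * bpr_marginal_cost t a \<beta> e x + (pot (trg e) - pot (src e)))"
    using assms(4)
    by (simp add: fun_eq_iff bpr_cost_def bpr_marginal_cost_def \<tau>_def \<delta>_def field_simps)
  have "system_optimum E src trg I org dst (bpr_cost t a \<beta>) \<mu> f"
    if "wardrop E src trg I org dst (\<lambda>e x. bpr_cost t a \<beta> e x + \<tau> e) \<mu> f" for \<mu> f
    using assms that[unfolded tolled_cost]
    by (intro wardrop_marginal_cost_imp_system_optimum[where k = "1 / (1 + \<beta>)" and pot = pot])
      (auto intro!: bpr_marginal_cost_above_tangent)
  then have "DIOT E src trg I org dst (bpr_cost t a \<beta>) \<tau>"
    unfolding DIOT_def by blast
  moreover have "\<forall>e\<in>E. 0 \<le> \<tau> e" using pot by (auto simp: \<tau>_def)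
  ultimately show ?thesis by blast
qed

end
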